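(* Let $F$ be a field of characteristic $2$ and let $q=\langle a_1,\dots,a_n\rangle$ be a totally singular quadratic form over $F$ with not all $a_i=0$. Let $L/F$ be a finite field extension, $\lambda\in L^*$ and $K=F(\lambda)$. If $\lambda\in G_L(q_L)$, then $K/F$ is separable or $L/K$ is inseparable.
   Context: $\langle a_1,\dots,a_n\rangle$ denotes $a_1x_1^2+\dots+a_nx_n^2$. $G_L(q_L)=\{c\in L^*: q_L\cong cq_L\}$ is the group of similarity factors of $q_L$. *)

theory Defs
  imports "HOL-Analysis.Analysis" "HOL-Computational_Algebra.Polynomial_Factorial"
begin

text \<open>Subfields of the ambient field 'a (which plays the role of L).\<close>
definition is_subfield :: "'a::field set \<Rightarrow> bool" where
  "is_subfield S \<longleftrightarrow> 0 \<in> S \<and> 1 \<in> S \<and>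
     (\<forall>x\<in>S. \<forall>y\<in>S. x + y \<in> S \<and> x - y \<in> S \<and> x * y \<in> S) \<and>
     (\<forall>x\<in>S. x \<noteq> 0 \<longrightarrow> inverse x \<in> S)"

definition adjoin :: "'a::field set \<Rightarrow> 'a \<Rightarrow> 'a set" where
  "adjoin F l = \<Inter>{S. is_subfield S \<and> F \<subseteq> S \<and> l \<in> S}"

definition finite_ext :: "'a::field set \<Rightarrow> bool" where
  "finite_ext F \<longleftrightarrow> (\<exists>B. finite B \<and>
     (\<forall>x. \<exists>c. (\<forall>b\<in>B. c b \<in> F) \<and> x = (\<Sum>b\<in>B. c b * b)))"

definition poly_over :: "'a::field set \<Rightarrow> 'a poly \<Rightarrow> bool" where
  "poly_over F p \<longleftrightarrow> (\<forall>i. coeff p i \<in> F)"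

definition is_minpoly :: "'a::field set \<Rightarrow> 'a \<Rightarrow> 'a poly \<Rightarrow> bool" where
  "is_minpoly F al p \<longleftrightarrow> poly_over F p \<and> lead_coeff p = 1 \<and> poly p al = 0 \<and>
     (\<forall>q. poly_over F q \<and> q \<noteq> 0 \<and> poly q al = 0 \<longrightarrow> degree p \<le> degree q)"

definition separable_poly :: "'a::field poly \<Rightarrow> bool" where
  "separable_poly p \<longleftrightarrow> coprime p (pderiv p)"

definition separable_elem :: "'a::field set \<Rightarrow> 'a \<Rightarrow> bool" where
  "separable_elem F al \<longleftrightarrow> (\<exists>p. is_minpoly F al p \<and> separable_poly p)"

definition separable_ext :: "'a::field set \<Rightarrow> 'a set \<Rightarrow> bool" where
  "separable_ext F K \<longleftrightarrow> (\<forall>al\<in>K. separable_elem F al)"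

definition diag_qf :: "('a::field, 'n::finite) vec \<Rightarrow> 'a ^ 'n \<Rightarrow> 'a" where
  "diag_qf a x = (\<Sum>i\<in>UNIV. a $ i * (x $ i)^2)"

definition sim_factors :: "'a::field ^ 'n::finite \<Rightarrow> 'a set" where
  "sim_factors a = {c. c \<noteq> 0 \<and> (\<exists>M :: 'a ^ 'n ^ 'n. invertible M \<and>
       (\<forall>x. diag_qf a (M *v x) = c * diag_qf a x))}"

end

theory Submission
  imports Defs
begin

text \<open>Write L for the ambient field. In characteristic 2 the F-span of the squares of L is the
  subfield \<open>F L\<^sup>2\<close>. If M is an isometry from q to \<open>\<lambda> q\<close> and \<open>a\<^sub>j \<noteq> 0\<close>, then
  \<open>\<lambda> a\<^sub>j = q(M e\<^sub>j) \<in> F L\<^sup>2\<close>, so \<open>K = F(\<lambda>) \<subseteq> F L\<^sup>2\<close>. If L/K is separable, every element of L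
  is separable over \<open>F L\<^sup>2\<close> and also purely inseparable over it, hence \<open>L = F L\<^sup>2\<close>. But then
  squaring maps an F-basis of L to a spanning, hence independent, family; so for every \<open>\<beta>\<close>
  the elements \<open>(\<beta>\<^sup>k)\<^sup>2\<close> with k below the degree of \<open>\<beta>\<close> are F-independent, which excludes a
  minimal polynomial in \<open>x\<^sup>2\<close>, i.e. one with vanishing derivative. Thus L/F, and in
  particular K/F, is separable.\<close>

lemma char2_of_nat:
  assumes "(2::'a::field) = 0"
  shows "(of_nat n :: 'a) = (if even n then 0 else 1)"
proof (cases "even n")
  case True
  then obtain k where "n = 2 * k" by blast
  then show ?thesis using assms True by simp
next
  case False
  then obtain k where "n = 2 * k + 1" using oddE by blast
  then show ?thesis using assms False by simp
qed

lemma char2_uminus: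
  assumes "(2::'a::field) = 0"
  shows "- (x::'a) = x"
  using assms by (metis add_eq_0_iff2 mult_2 mult_zero_left)

lemma char2_power2_sum:
  assumes "(2::'a::field) = 0"
  shows "(\<Sum>i\<in>A. g i)\<^sup>2 = (\<Sum>i\<in>A. (g i)\<^sup>2 :: 'a)"
proof (induction A rule: infinite_finite_induct)
  case (insert x A)
  have "(g x + sum g A)\<^sup>2 = (g x)\<^sup>2 + (sum g A)\<^sup>2 + 2 * g x * sum g A"
    by (simp add: power2_eq_square algebra_simps)
  then show ?case using insert assms by simp
qed simp_all

lemma char2_pderiv_eq_0_imp_odd_coeff:
  fixes p :: "'a::field poly"
  assumes "(2::'a) = 0" and "pderiv p = 0" and "odd i"
  shows "coeff p i = 0"
proof -
  obtain k where k: "i = Suc k" using \<open>odd i\<close> by (cases i) auto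
  have "coeff (pderiv p) k = of_nat (Suc k) * coeff p (Suc k)" by (rule coeff_pderiv)
  then show ?thesis using assms char2_of_nat[OF assms(1), of "Suc k"] k by simp
qed

lemma poly_eq_sum_even_coeffs:
  fixes p :: "'a::comm_semiring_1 poly"
  assumes "\<And>i. odd i \<Longrightarrow> coeff p i = 0"
  shows "poly p x = (\<Sum>k\<le>degree p div 2. coeff p (2 * k) * (x ^ k)\<^sup>2)"
proof -
  let ?m = "degree p div 2"
  have "(\<Sum>k\<le>?m. coeff p (2 * k) * (x ^ k)\<^sup>2) = (\<Sum>i\<in>(\<lambda>k. 2 * k) ` {..?m}. coeff p i * x ^ i)"
    by (subst sum.reindex) (auto simp: inj_on_def power_mult[symmetric] mult.commute)
  also have "\<dots> = (\<Sum>i\<le>degree p. coeff p i * x ^ i)"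
  proof (rule sum.mono_neutral_left)
    have "coeff p i = 0" if "i \<le> degree p" "i \<notin> (\<lambda>k. 2 * k) ` {..?m}" for i
      using that assms[of i] by (cases "even i") (auto elim!: evenE)
    then show "\<forall>i\<in>{..degree p} - (\<lambda>k. 2 * k) ` {..?m}. coeff p i * x ^ i = 0"
      by simp
  qed auto
  finally show ?thesis by (simp add: poly_altdef)
qed

lemma degree_pderiv_less:
  fixes p :: "'a::field poly"
  assumes "degree p > 0"
  shows "degree (pderiv p) < degree p"
proof -
  have "degree (pderiv p) \<le> degree p - 1"
    by (rule degree_le) (use assms in \<open>auto simp: coeff_pderiv coeff_eq_0\<close>)
  then show ?thesis using assms by simp
qed

lemma solve_lin_comb:
  fixes c :: "'i \<Rightarrow> 'a::field"
  assumes "c0 \<noteq> 0" and "c0 * x + (\<Sum>j\<in>J. c j * u j) = 0"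
  shows "x = (\<Sum>j\<in>J. (- c j / c0) * u j)"
proof -
  have "x = - (\<Sum>j\<in>J. c j * u j) / c0"
    using assms by (simp add: field_simps add_eq_0_iff2)
  then show ?thesis by (simp add: sum_divide_distrib sum_negf)
qed

lemma coeff_sum_monom_if:
  "finite A \<Longrightarrow> coeff (\<Sum>i\<in>A. monom (c i) i) k = (if k \<in> A then c k else 0)"
  by (simp add: coeff_sum)

lemma poly_sum_monom:
  fixes x :: "'a::comm_semiring_1"
  shows "poly (\<Sum>i\<in>A. monom (c i) i) x = (\<Sum>i\<in>A. c i * x ^ i)"
  by (simp add: poly_sum Polynomial.poly_monom)

text \<open>In characteristic 2 this is the compositum \<open>F L\<^sup>2\<close>.\<close>

inductive_set square_span :: "'a::field set \<Rightarrow> 'a set" for F where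
  zero: "0 \<in> square_span F"
| add_square: "x \<in> square_span F \<Longrightarrow> f \<in> F \<Longrightarrow> x + f * y\<^sup>2 \<in> square_span F"

definition lin_span :: "'a::field set \<Rightarrow> ('i \<Rightarrow> 'a) \<Rightarrow> 'i set \<Rightarrow> 'a set" where
  "lin_span F w I = {x. \<exists>c. (\<forall>i\<in>I. c i \<in> F) \<and> x = (\<Sum>i\<in>I. c i * w i)}"

definition lin_indep :: "'a::field set \<Rightarrow> ('i \<Rightarrow> 'a) \<Rightarrow> 'i set \<Rightarrow> bool" where
  "lin_indep F v J \<longleftrightarrow>
     (\<forall>c. (\<forall>j\<in>J. c j \<in> F) \<longrightarrow> (\<Sum>j\<in>J. c j * v j) = 0 \<longrightarrow> (\<forall>j\<in>J. c j = 0))"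

lemma lin_spanI: "\<forall>i\<in>I. c i \<in> F \<Longrightarrow> x = (\<Sum>i\<in>I. c i * w i) \<Longrightarrow> x \<in> lin_span F w I"
  unfolding lin_span_def by blast

lemma not_lin_indepI:
  "\<forall>j\<in>J. c j \<in> F \<Longrightarrow> (\<Sum>j\<in>J. c j * v j) = 0 \<Longrightarrow> j \<in> J \<Longrightarrow> c j \<noteq> 0 \<Longrightarrow> \<not> lin_indep F v J"
  unfolding lin_indep_def by blast

lemma lin_indep_cong: "(\<And>j. j \<in> J \<Longrightarrow> u j = v j) \<Longrightarrow> lin_indep F u J \<longleftrightarrow> lin_indep F v J"
  unfolding lin_indep_def by (metis (no_types, lifting) sum.cong)

locale subfield =
  fixes F :: "'a::field set"
  assumes is_subfield: "is_subfield F"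
begin

lemma zero_mem: "0 \<in> F" and one_mem: "1 \<in> F"
  using is_subfield by (auto simp: is_subfield_def)

lemma add_mem: "x \<in> F \<Longrightarrow> y \<in> F \<Longrightarrow> x + y \<in> F"
  and diff_mem: "x \<in> F \<Longrightarrow> y \<in> F \<Longrightarrow> x - y \<in> F"
  and mult_mem: "x \<in> F \<Longrightarrow> y \<in> F \<Longrightarrow> x * y \<in> F"
  using is_subfield by (auto simp: is_subfield_def)

lemma inverse_mem: "x \<in> F \<Longrightarrow> inverse x \<in> F"
  using is_subfield zero_mem by (cases "x = 0") (auto simp: is_subfield_def)

lemma uminus_mem: "x \<in> F \<Longrightarrow> - x \<in> F"
  using diff_mem[OF zero_mem] by fastforce

lemma divide_mem: "x \<in> F \<Longrightarrow> y \<in> F \<Longrightarrow> x / y \<in> F"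
  by (simp add: divide_inverse inverse_mem mult_mem)

lemma of_nat_mem: "(of_nat n :: 'a) \<in> F"
  by (induction n) (auto simp: zero_mem one_mem add_mem)

lemma sum_mem: "(\<And>i. i \<in> A \<Longrightarrow> f i \<in> F) \<Longrightarrow> sum f A \<in> F"
  by (induction A rule: infinite_finite_induct) (auto simp: zero_mem add_mem)

lemma square_span_add:
  assumes "x \<in> square_span F" and "y \<in> square_span F"
  shows "x + y \<in> square_span F"
  using assms(2)
proof (induction y rule: square_span.induct)
  case (add_square y f z)
  then have "(x + y) + f * z\<^sup>2 \<in> square_span F" using assms(1) by (intro square_span.add_square)
  then show ?case by (simp add: add.assoc)
qed (simp add: assms(1))

lemma square_span_mult_square:
  "x \<in> square_span F \<Longrightarrow> f \<in> F \<Longrightarrow> x * (f * z\<^sup>2) \<in> square_span F"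
proof (induction x rule: square_span.induct)
  case (add_square x g y)
  have "x * (f * z\<^sup>2) + (g * f) * (y * z)\<^sup>2 \<in> square_span F"
    using add_square mult_mem by (intro square_span.add_square) auto
  then show ?case by (simp add: algebra_simps power2_eq_square)
qed (simp add: square_span.zero)

lemma square_span_mult:
  assumes "x \<in> square_span F" and "y \<in> square_span F"
  shows "x * y \<in> square_span F"
  using assms(2) by (induction y rule: square_span.induct)
    (auto simp: distrib_left square_span.zero assms(1) intro!: square_span_add square_span_mult_square)

lemma square_mem_square_span: "z\<^sup>2 \<in> square_span F"
  using square_span.add_square[OF square_span.zero one_mem, of z] by simp

lemma mem_square_span: "f \<in> F \<Longrightarrow> f \<in> square_span F"
  using square_span.add_square[OF square_span.zero, where f=f and y=1] by simp

lemma square_span_inverse: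
  assumes "x \<in> square_span F"
  shows "inverse x \<in> square_span F"
proof (cases "x = 0")
  case False
  then have "inverse x = x * (inverse x)\<^sup>2" by (simp add: power2_eq_square)
  then show ?thesis using square_span_mult[OF assms square_mem_square_span] by metis
qed (simp add: square_span.zero)

lemma square_span_sum:
  "(\<And>i. i \<in> A \<Longrightarrow> g i \<in> square_span F) \<Longrightarrow> sum g A \<in> square_span F"
  by (induction A rule: infinite_finite_induct) (auto simp: square_span.zero square_span_add)

lemma is_subfield_square_span:
  assumes "(2::'a) = 0"
  shows "is_subfield (square_span F)"
  unfolding is_subfield_def
  using square_span.zero mem_square_span[OF one_mem] square_span_add square_span_mult
    square_span_inverse char2_uminus[OF assms]
  by (metis diff_conv_add_uminus)

lemma not_lin_indep_shear:
  assumes "finite J'" and "j0 \<notin> J'" and "\<forall>j\<in>J'. t j \<in> F"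
    and "\<not> lin_indep F (\<lambda>j. v j - t j * v j0) J'"
  shows "\<not> lin_indep F v (insert j0 J')"
proof -
  obtain d j1 where d: "\<forall>j\<in>J'. d j \<in> F" "(\<Sum>j\<in>J'. d j * (v j - t j * v j0)) = 0"
    and j1: "j1 \<in> J'" "d j1 \<noteq> 0"
    using assms(4) unfolding lin_indep_def by blast
  define e where "e j = (if j = j0 then - (\<Sum>j\<in>J'. d j * t j) else d j)" for j
  have "(\<Sum>j\<in>J'. e j * v j) = (\<Sum>j\<in>J'. d j * v j)"
    using assms(2) by (intro sum.cong) (auto simp: e_def)
  then have "(\<Sum>j\<in>insert j0 J'. e j * v j) = e j0 * v j0 + (\<Sum>j\<in>J'. d j * v j)"
    using assms(1,2) by simp
  also have "\<dots> = (\<Sum>j\<in>J'. d j * (v j - t j * v j0))"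
    by (simp add: e_def right_diff_distrib sum_subtractf sum_distrib_right mult.assoc)
  finally have "(\<Sum>j\<in>insert j0 J'. e j * v j) = 0" using d(2) by simp
  moreover have "\<forall>j\<in>insert j0 J'. e j \<in> F"
    using d(1) assms(2,3) by (auto simp: e_def intro!: uminus_mem sum_mem mult_mem)
  moreover have "e j1 = d j1" using j1 assms(2) by (auto simp: e_def)
  ultimately show ?thesis
    using j1 by (intro not_lin_indepI[where c = e and j = j1]) auto
qed

lemma lin_span_eliminate:
  assumes "\<forall>k\<in>insert i I. c k \<in> F" and "\<forall>k\<in>insert i I. c0 k \<in> F" and "c0 i \<noteq> 0"
  shows "(c i * w i + (\<Sum>k\<in>I. c k * w k)) - c i / c0 i * (c0 i * w i + (\<Sum>k\<in>I. c0 k * w k))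
    \<in> lin_span F w I"
proof (rule lin_spanI)
  show "\<forall>k\<in>I. c k - c i / c0 i * c0 k \<in> F"
    using assms(1,2) by (auto intro!: diff_mem mult_mem divide_mem)
  show "(c i * w i + (\<Sum>k\<in>I. c k * w k)) - c i / c0 i * (c0 i * w i + (\<Sum>k\<in>I. c0 k * w k))
    = (\<Sum>k\<in>I. (c k - c i / c0 i * c0 k) * w k)"
    using assms(3) by (simp add: algebra_simps sum_subtractf sum_distrib_left)
qed

lemma not_lin_indep_if_card_less:
  assumes "finite I" and "finite J" and "card I < card J" and "\<forall>j\<in>J. v j \<in> lin_span F w I"
  shows "\<not> lin_indep F v J"
  using assms
proof (induction I arbitrary: J v rule: finite_induct)
  case empty
  then obtain j0 where j0: "j0 \<in> J" by fastforce
  have "v j0 = 0" using empty j0 by (auto simp: lin_span_def)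
  then have "(\<Sum>j\<in>J. (if j = j0 then 1 else 0) * v j) = 0"
    by (intro sum.neutral) simp
  then show ?case
    using j0 zero_mem one_mem by (intro not_lin_indepI[of _ "\<lambda>j. if j = j0 then 1 else 0"]) auto
next
  case (insert i I J v)
  obtain C where C: "\<forall>k\<in>insert i I. C j k \<in> F"
    and vj: "v j = C j i * w i + (\<Sum>k\<in>I. C j k * w k)" if "j \<in> J" for j
    using insert.prems(3) insert.hyps unfolding lin_span_def by simp metis
  show ?case
  proof (cases "\<forall>j\<in>J. C j i = 0")
    case True
    then have "\<forall>j\<in>J. v j \<in> lin_span F w I"
      using C vj by (auto intro!: lin_spanI[of _ "C _"])
    then show ?thesis using insert by (intro insert.IH) auto
  next
    case False
    then obtain j0 where j0: "j0 \<in> J" "C j0 i \<noteq> 0" by blast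
    define J' where "J' = J - {j0}"
    define t where "t j = C j i / C j0 i" for j
    have tF: "t j \<in> F" if "j \<in> J" for j
      using C[OF that] C[OF j0(1)] divide_mem unfolding t_def by auto
    have "v j - t j * v j0 \<in> lin_span F w I" if "j \<in> J'" for j
      using lin_span_eliminate[OF C C j0(2)] that j0(1) vj by (simp add: J'_def t_def)
    moreover have "finite J'" "card I < card J'"
      using insert.prems(1,2) insert.hyps j0 J'_def by auto
    ultimately have "\<not> lin_indep F (\<lambda>j. v j - t j * v j0) J'"
      by (intro insert.IH) auto
    then have "\<not> lin_indep F v (insert j0 J')"
      using \<open>finite J'\<close> tF by (intro not_lin_indep_shear) (auto simp: J'_def)
    then show ?thesis using j0(1) by (simp add: J'_def insert_absorb)
  qed
qed

lemma lin_indep_subset: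
  assumes "lin_indep F v J" and "J' \<subseteq> J" and "finite J"
  shows "lin_indep F v J'"
  unfolding lin_indep_def
proof (intro allI impI ballI)
  fix c j assume cF: "\<forall>j\<in>J'. c j \<in> F" and s: "(\<Sum>j\<in>J'. c j * v j) = 0" and j: "j \<in> J'"
  define c' where "c' j = (if j \<in> J' then c j else 0)" for j
  have "(\<Sum>j\<in>J. c' j * v j) = (\<Sum>j\<in>J'. c j * v j)"
    by (rule sum.mono_neutral_cong_right[OF assms(3,2)]) (auto simp: c'_def)
  moreover have "\<forall>j\<in>J. c' j \<in> F" using cF zero_mem by (auto simp: c'_def)
  ultimately have "\<forall>j\<in>J. c' j = 0" using assms(1) s unfolding lin_indep_def by simp
  then show "c j = 0" using j assms(2) by (auto simp: c'_def split: if_splits)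
qed

lemma lin_indep_insert:
  assumes "lin_indep F u J" and "finite J" and "k \<notin> J" and "x \<notin> lin_span F u J"
  shows "lin_indep F (u(k := x)) (insert k J)"
  unfolding lin_indep_def
proof (intro allI impI ballI)
  fix c j
  assume cF: "\<forall>j\<in>insert k J. c j \<in> F" and s: "(\<Sum>j\<in>insert k J. c j * (u(k := x)) j) = 0"
    and j: "j \<in> insert k J"
  have "(\<Sum>j\<in>J. c j * (u(k := x)) j) = (\<Sum>j\<in>J. c j * u j)"
    using assms(3) by (intro sum.cong) auto
  then have s': "c k * x + (\<Sum>j\<in>J. c j * u j) = 0" using s assms(2,3) by simp
  have ck: "c k = 0"
  proof (rule ccontr)
    assume "c k \<noteq> 0"
    then have "x = (\<Sum>j\<in>J. (- c j / c k) * u j)" using s' by (rule solve_lin_comb)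
    then have "x \<in> lin_span F u J"
      using cF by (intro lin_spanI[where c = "\<lambda>j. - c j / c k"])
        (auto intro!: divide_mem uminus_mem)
    then show False using assms(4) by simp
  qed
  then have "(\<Sum>j\<in>J. c j * u j) = 0" using s' by simp
  then have "\<forall>j\<in>J. c j = 0" using assms(1) cF unfolding lin_indep_def by auto
  then show "c j = 0" using ck j by auto
qed

lemma lin_indep_extends_to_basis:
  fixes u :: "nat \<Rightarrow> 'a"
  assumes "finite B" and "lin_span F id B = UNIV" and "finite J" and "lin_indep F u J"
  shows "\<exists>J2 u2. J \<subseteq> J2 \<and> finite J2 \<and> (\<forall>j\<in>J. u2 j = u j) \<and>
    lin_indep F u2 J2 \<and> lin_span F u2 J2 = UNIV"
  using assms(3,4)
proof (induction "card B - card J" arbitrary: J u rule: less_induct)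
  case less
  show ?case
  proof (cases "lin_span F u J = UNIV")
    case True
    then show ?thesis using less.prems by blast
  next
    case False
    then obtain x where x: "x \<notin> lin_span F u J" by blast
    obtain k where k: "k \<notin> J" using less.prems(1) by (meson ex_new_if_finite infinite_UNIV_nat)
    have indep: "lin_indep F (u(k := x)) (insert k J)"
      using lin_indep_insert[OF less.prems(2,1) k x] .
    have "\<not> card B < card (insert k J)"
      using not_lin_indep_if_card_less[OF assms(1), of "insert k J" "u(k := x)" id] indep
        assms(2) less.prems(1) by auto
    then have "card B - card (insert k J) < card B - card J"
      using k less.prems(1) by simp
    then obtain J2 u2 where "insert k J \<subseteq> J2" "finite J2" "\<forall>j\<in>insert k J. u2 j = (u(k := x)) j"
      "lin_indep F u2 J2" "lin_span F u2 J2 = UNIV"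
      using less.hyps[of "insert k J" "u(k := x)"] less.prems(1) indep by blast
    then show ?thesis using k by (intro exI[of _ J2] exI[of _ u2]) auto
  qed
qed

lemma lin_span_insert_redundant:
  assumes "finite J" and "j0 \<notin> J" and "u j0 \<in> lin_span F u J"
  shows "lin_span F u (insert j0 J) \<subseteq> lin_span F u J"
proof
  fix x assume "x \<in> lin_span F u (insert j0 J)"
  then obtain e where e: "\<forall>j\<in>insert j0 J. e j \<in> F" "x = (\<Sum>j\<in>insert j0 J. e j * u j)"
    unfolding lin_span_def by blast
  obtain c where c: "\<forall>j\<in>J. c j \<in> F" "u j0 = (\<Sum>j\<in>J. c j * u j)"
    using assms(3) unfolding lin_span_def by blast
  have "x = e j0 * u j0 + (\<Sum>j\<in>J. e j * u j)" using e(2) assms(1,2) by simp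
  also have "\<dots> = (\<Sum>j\<in>J. e j * u j) + (\<Sum>j\<in>J. e j0 * c j * u j)"
    unfolding c(2) by (simp add: sum_distrib_left mult.assoc add.commute)
  also have "\<dots> = (\<Sum>j\<in>J. (e j + e j0 * c j) * u j)"
    by (simp add: sum.distrib distrib_right)
  finally have "x = (\<Sum>j\<in>J. (e j + e j0 * c j) * u j)" .
  then show "x \<in> lin_span F u J"
    using e(1) c(1)
      by (intro lin_spanI[where c = "\<lambda>j. e j + e j0 * c j"]) (auto intro!: add_mem mult_mem)
qed

lemma not_lin_indep_imp_mem_span:
  assumes "finite J" and "\<not> lin_indep F u J"
  obtains j0 where "j0 \<in> J" "u j0 \<in> lin_span F u (J - {j0})"
proof -
  obtain c j0 where c: "\<forall>j\<in>J. c j \<in> F" "(\<Sum>j\<in>J. c j * u j) = 0" "j0 \<in> J" "c j0 \<noteq> 0"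
    using assms(2) unfolding lin_indep_def by blast
  have "c j0 * u j0 + (\<Sum>j\<in>J - {j0}. c j * u j) = 0"
    using c(2) sum.remove[OF assms(1) c(3), of "\<lambda>j. c j * u j"] by simp
  then have "u j0 = (\<Sum>j\<in>J - {j0}. (- c j / c j0) * u j)"
    using c(4) solve_lin_comb by blast
  then have "u j0 \<in> lin_span F u (J - {j0})"
    using c(1,3)
      by (intro lin_spanI[where c = "\<lambda>j. - c j / c j0"]) (auto intro!: divide_mem uminus_mem)
  then show ?thesis using c(3) that by blast
qed

lemma lin_indep_if_spanning:
  assumes "finite J" and "lin_indep F u J" and "lin_span F u2 J = UNIV"
  shows "lin_indep F u2 J"
proof (rule ccontr)
  assume "\<not> lin_indep F u2 J"
  then obtain j0 where j0: "j0 \<in> J" "u2 j0 \<in> lin_span F u2 (J - {j0})"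
    using not_lin_indep_imp_mem_span[OF assms(1)] by blast
  have "lin_span F u2 J \<subseteq> lin_span F u2 (J - {j0})"
    using lin_span_insert_redundant[of "J - {j0}" j0 u2] assms(1) j0 by (simp add: insert_absorb)
  then have "\<forall>j\<in>J. u j \<in> lin_span F u2 (J - {j0})" using assms(3) by auto
  then have "\<not> lin_indep F u J"
    using assms(1)
    by (intro not_lin_indep_if_card_less[OF _ assms(1) card_Diff1_less[OF assms(1) j0(1)]]) simp_all
  then show False using assms(2) by simp
qed

lemma square_span_subset_lin_span_squares:
  assumes "(2::'a) = 0" and "lin_span F u J = UNIV"
  shows "square_span F \<subseteq> lin_span F (\<lambda>j. (u j)\<^sup>2) J"
proof
  fix x assume "x \<in> square_span F"
  then show "x \<in> lin_span F (\<lambda>j. (u j)\<^sup>2) J"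
  proof (induction x rule: square_span.induct)
    case zero
    show ?case using zero_mem by (intro lin_spanI[of _ "\<lambda>j. 0"]) auto
  next
    case (add_square x f y)
    obtain c where c: "\<forall>j\<in>J. c j \<in> F" "x = (\<Sum>j\<in>J. c j * (u j)\<^sup>2)"
      using add_square.IH unfolding lin_span_def by blast
    obtain d where d: "\<forall>j\<in>J. d j \<in> F" "y = (\<Sum>j\<in>J. d j * u j)"
      using assms(2) unfolding lin_span_def by blast
    have "y\<^sup>2 = (\<Sum>j\<in>J. (d j)\<^sup>2 * (u j)\<^sup>2)"
      unfolding d(2) char2_power2_sum[OF assms(1)] by (simp add: power_mult_distrib)
    then have "x + f * y\<^sup>2 = (\<Sum>j\<in>J. (c j + f * (d j)\<^sup>2) * (u j)\<^sup>2)"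
      using c(2) by (simp add: sum_distrib_left sum.distrib distrib_right mult.assoc)
    moreover have "\<forall>j\<in>J. c j + f * (d j)\<^sup>2 \<in> F"
      using c(1) d(1) add_square.hyps(2) by (simp add: power2_eq_square add_mem mult_mem)
    ultimately show ?case by (intro lin_spanI)
  qed
qed

lemma poly_over_0: "poly_over F 0"
  and poly_over_1: "poly_over F 1"
  by (simp_all add: poly_over_def coeff_1 zero_mem one_mem)

lemma poly_over_add: "poly_over F p \<Longrightarrow> poly_over F q \<Longrightarrow> poly_over F (p + q)"
  and poly_over_diff: "poly_over F p \<Longrightarrow> poly_over F q \<Longrightarrow> poly_over F (p - q)"
  and poly_over_smult: "c \<in> F \<Longrightarrow> poly_over F p \<Longrightarrow> poly_over F (smult c p)"
  by (simp_all add: poly_over_def add_mem diff_mem mult_mem)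

lemma poly_over_mult: "poly_over F p \<Longrightarrow> poly_over F q \<Longrightarrow> poly_over F (p * q)"
  unfolding poly_over_def coeff_mult by (auto intro!: sum_mem mult_mem)

lemma poly_over_pCons_iff: "poly_over F (pCons a p) \<longleftrightarrow> a \<in> F \<and> poly_over F p"
  unfolding poly_over_def by (metis coeff_pCons_0 coeff_pCons_Suc not0_implies_Suc)

lemma poly_over_pderiv: "poly_over F p \<Longrightarrow> poly_over F (pderiv p)"
  unfolding poly_over_def coeff_pderiv using of_nat_mem
    by (auto intro!: mult_mem simp del: of_nat_Suc)

lemma poly_over_sum_monom:
  "finite A \<Longrightarrow> \<forall>i\<in>A. c i \<in> F \<Longrightarrow> poly_over F (\<Sum>i\<in>A. monom (c i) i)"
  unfolding poly_over_def by (simp add: coeff_sum_monom_if zero_mem)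

lemma poly_over_div_mod:
  assumes "poly_over F p" and "poly_over F q"
  shows "poly_over F (p div q) \<and> poly_over F (p mod q)"
  using assms(1)
proof (induction p rule: pCons_induct)
  case (pCons a p)
  then have a: "a \<in> F" and IH: "poly_over F (p div q)" "poly_over F (p mod q)"
    using assms(2) by (auto simp: poly_over_pCons_iff)
  have "lead_coeff q \<in> F" "coeff (pCons a (p mod q)) (degree q) \<in> F"
    using assms(2) a IH(2) poly_over_pCons_iff[of a "p mod q"] unfolding poly_over_def by auto
  then show ?case
    unfolding div_pCons_eq mod_pCons_eq using a IH assms(2)
    by (auto simp: poly_over_pCons_iff poly_over_0 intro!: poly_over_diff poly_over_smult divide_mem)
qed (simp add: poly_over_0)

lemma minpoly_nonzero: "is_minpoly F \<beta> p \<Longrightarrow> p \<noteq> 0"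
  by (auto simp: is_minpoly_def)

lemma minpoly_degree_pos:
  assumes "is_minpoly F \<beta> p"
  shows "degree p > 0"
proof (rule ccontr)
  assume "\<not> degree p > 0"
  then have "poly p \<beta> = 1" using assms by (simp add: is_minpoly_def poly_altdef)
  then show False using assms by (simp add: is_minpoly_def)
qed

lemma lin_indep_powers_minpoly:
  assumes "is_minpoly F \<beta> p"
  shows "lin_indep F (\<lambda>i. \<beta> ^ i) {..<degree p}"
  unfolding lin_indep_def
proof (intro allI impI ballI)
  fix c j assume cF: "\<forall>i\<in>{..<degree p}. c i \<in> F"
    and root: "(\<Sum>i\<in>{..<degree p}. c i * \<beta> ^ i) = 0" and j: "j \<in> {..<degree p}"
  define q where "q = (\<Sum>i\<in>{..<degree p}. monom (c i) i)"
  have coeff_q: "coeff q k = (if k < degree p then c k else 0)" for k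
    unfolding q_def by (simp add: coeff_sum_monom_if)
  have "degree q < degree p"
    using minpoly_degree_pos[OF assms] by (intro degree_lessI) (auto simp: coeff_q)
  moreover have "poly_over F q" "poly q \<beta> = 0"
    using cF root by (simp_all add: q_def poly_over_sum_monom poly_sum_monom)
  ultimately have "q = 0" using assms unfolding is_minpoly_def by (meson not_le)
  then show "c j = 0" using coeff_q[of j] j by simp
qed

lemma minpoly_factor_degree:
  assumes "is_minpoly F \<beta> p" and "p = a * s" and "poly_over F a" and "poly_over F s"
  shows "degree a = 0 \<or> degree s = 0"
proof -
  have nz: "a \<noteq> 0" "s \<noteq> 0" using minpoly_nonzero[OF assms(1)] assms(2) by auto
  have "poly a \<beta> = 0 \<or> poly s \<beta> = 0" using assms(1,2) by (simp add: is_minpoly_def)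
  then have "degree p \<le> degree a \<or> degree p \<le> degree s"
    using assms(1,3,4) nz unfolding is_minpoly_def by blast
  then show ?thesis using assms(2) degree_mult_eq[OF nz] by auto
qed

lemma minpoly_divisor_degree:
  assumes mp: "is_minpoly F \<beta> p" and s: "poly_over F s" "s dvd p" "degree s < degree p"
  shows "degree s = 0"
proof (rule ccontr)
  have p: "poly_over F p" using mp by (simp add: is_minpoly_def)
  have p_eq: "p = p div s * s" using s(2) by simp
  assume "degree s \<noteq> 0"
  then have "degree (p div s) = 0"
    using minpoly_factor_degree[OF mp p_eq _ s(1)] poly_over_div_mod[OF p s(1)] by auto
  then have "degree p \<le> degree s" using degree_mult_le[of "p div s" s] p_eq by simp
  then show False using s(3) by simp
qed

text \<open>Coprimality refers to the polynomial ring over the ambient field, so it is derived from a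
  B\'ezout identity over F: a nonzero combination \<open>s = u p + v r\<close> of least degree divides \<open>p\<close>
  and must be constant.\<close>

lemma minpoly_coprime:
  assumes mp: "is_minpoly F \<beta> p" and r: "poly_over F r" "r \<noteq> 0" "degree r < degree p"
  shows "coprime p r"
proof -
  have p: "poly_over F p" using mp by (simp add: is_minpoly_def)
  define comb where "comb = {u * p + v * r | u v. poly_over F u \<and> poly_over F v}"
  have comb_over: "poly_over F s" if "s \<in> comb" for s
    using that p r(1) by (auto simp: comb_def intro: poly_over_add poly_over_mult)
  have "r = 0 * p + 1 * r" by simp
  then have "r \<in> comb - {0}"
    using r poly_over_0 poly_over_1 unfolding comb_def by blast
  then obtain s where s: "s \<in> comb - {0}" and s_min: "\<And>s'. s' \<in> comb - {0} \<Longrightarrow> degree s \<le> degree s'"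
    using ex_has_least_nat[of "\<lambda>s. s \<in> comb - {0}" r degree] by blast
  then obtain u v where uv: "s = u * p + v * r" "poly_over F u" "poly_over F v"
    unfolding comb_def by blast
  have s_over: "poly_over F s" using s comb_over by blast
  have "p mod s \<in> comb"
  proof -
    have "p mod s = (1 - p div s * u) * p + (0 - p div s * v) * r"
      using uv(1) div_mult_mod_eq[of p s] by (simp add: algebra_simps)
    moreover have "poly_over F (1 - p div s * u)" "poly_over F (0 - p div s * v)"
      using poly_over_div_mod[OF p s_over] uv(2,3)
      by (intro poly_over_diff poly_over_0 poly_over_1 poly_over_mult; simp)+
    ultimately show ?thesis unfolding comb_def by blast
  qed
  then have "p mod s = 0"
    using s s_min degree_mod_less'[of s p] by fastforce
  moreover have "degree s < degree p" using s_min \<open>r \<in> comb - {0}\<close> r(3) by fastforce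
  ultimately have "degree s = 0" using minpoly_divisor_degree[OF mp s_over]
    by (simp add: mod_eq_0_iff_dvd)
  then have "is_unit s" using s is_unit_iff_degree by blast
  show ?thesis
  proof (rule coprimeI)
    fix c assume "c dvd p" and "c dvd r"
    then have "c dvd s" using uv(1) by simp
    then show "is_unit c" using \<open>is_unit s\<close> dvd_unit_imp_unit by blast
  qed
qed

lemma poly_mem_square_span:
  assumes "\<And>i. coeff q i \<in> square_span F" and "\<And>i. odd i \<Longrightarrow> coeff q i = 0"
  shows "poly q x \<in> square_span F"
proof -
  have "coeff q (2 * k) * (x ^ k)\<^sup>2 \<in> square_span F" for k
    using assms(1) square_mem_square_span by (rule square_span_mult)
  then show ?thesis by (simp add: poly_eq_sum_even_coeffs[OF assms(2)] square_span_sum)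
qed

text \<open>An element separable over a subfield of \<open>F L\<^sup>2\<close> already lies in \<open>F L\<^sup>2\<close>: with \<open>p\<close> its
  minimal polynomial, both \<open>p'\<close> and \<open>p + x p'\<close> have only even-degree terms in characteristic 2,
  so \<open>p'(\<alpha>)\<close> and \<open>\<alpha> p'(\<alpha>) = p(\<alpha>) + \<alpha> p'(\<alpha>)\<close> lie in \<open>F L\<^sup>2\<close>, and \<open>p'(\<alpha>) \<noteq> 0\<close>.\<close>

lemma separable_mem_square_span:
  assumes char2: "(2::'a) = 0" and "K \<subseteq> square_span F" and sep: "separable_elem K \<alpha>"
  shows "\<alpha> \<in> square_span F"
proof -
  obtain p where mp: "is_minpoly K \<alpha> p" and cop: "coprime p (pderiv p)"
    using sep unfolding separable_elem_def separable_poly_def by blast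
  have root: "poly p \<alpha> = 0" using mp by (simp add: is_minpoly_def)
  have coeff_p: "coeff p i \<in> square_span F" for i
    using mp assms(2) unfolding is_minpoly_def poly_over_def by auto
  have "poly (pderiv p) \<alpha> \<noteq> 0"
  proof
    assume "poly (pderiv p) \<alpha> = 0"
    then have "[:-\<alpha>, 1:] dvd pderiv p" "[:-\<alpha>, 1:] dvd p"
      using root by (simp_all add: poly_eq_0_iff_dvd)
    then have "is_unit [:-\<alpha>, 1:]" using cop coprime_common_divisor by blast
    then show False by (simp add: is_unit_iff_degree)
  qed
  moreover have D: "poly (pderiv p) \<alpha> \<in> square_span F"
    by (rule poly_mem_square_span)
      (auto simp: coeff_pderiv coeff_p char2_of_nat[OF char2] square_span.zero simp del: of_nat_Suc)
  moreover have "poly (p + pCons 0 (pderiv p)) \<alpha> \<in> square_span F"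
  proof (rule poly_mem_square_span)
    fix i
    have "coeff (p + pCons 0 (pderiv p)) i = of_nat (Suc i) * coeff p i"
      by (cases i) (simp_all add: coeff_pderiv algebra_simps)
    then show "coeff (p + pCons 0 (pderiv p)) i \<in> square_span F"
      and "odd i \<Longrightarrow> coeff (p + pCons 0 (pderiv p)) i = 0"
      by (simp_all add: coeff_p char2_of_nat[OF char2] square_span.zero del: of_nat_Suc)
  qed
  then have "\<alpha> * poly (pderiv p) \<alpha> \<in> square_span F" using root by simp
  from square_span_mult[OF this square_span_inverse[OF D]]
  show ?thesis using \<open>poly (pderiv p) \<alpha> \<noteq> 0\<close> by (simp add: mult.assoc)
qed

lemma sim_factor_mem_square_span:
  assumes "\<forall>i. a $ i \<in> F" and "\<exists>i. a $ i \<noteq> 0" and "lam \<in> sim_factors a"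
  shows "lam \<in> square_span F"
proof -
  obtain M where M: "\<And>x. diag_qf a (M *v x) = lam * diag_qf a x"
    using assms(3) unfolding sim_factors_def by blast
  obtain j where j: "a $ j \<noteq> 0" using assms(2) by blast
  have "diag_qf a (axis j 1) = (\<Sum>i\<in>UNIV. if i = j then a $ i else 0)"
    unfolding diag_qf_def by (intro sum.cong) (auto simp: axis_def)
  then have "diag_qf a (axis j 1) = a $ j" by simp
  then have "lam * a $ j = diag_qf a (M *v axis j 1)" using M by simp
  also have "\<dots> \<in> square_span F"
    unfolding diag_qf_def using assms(1)
    by (intro square_span_sum square_span_mult mem_square_span square_mem_square_span) auto
  finally have "lam * a $ j \<in> square_span F" .
  moreover have "inverse (a $ j) \<in> square_span F"
    using assms(1) by (simp add: mem_square_span inverse_mem)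
  ultimately have "lam * a $ j * inverse (a $ j) \<in> square_span F" by (rule square_span_mult)
  then show ?thesis using j by (simp add: mult.assoc)
qed

end

locale finite_extension = subfield +
  assumes finite_ext: "finite_ext F"
begin

lemma exists_spanning_set:
  obtains B where "finite B" "lin_span F id B = UNIV"
  using finite_ext unfolding finite_ext_def lin_span_def by fastforce

lemma exists_poly_root: "\<exists>q. poly_over F q \<and> q \<noteq> 0 \<and> poly q \<beta> = 0"
proof -
  obtain B where B: "finite B" "lin_span F id B = UNIV" by (rule exists_spanning_set)
  have "\<not> lin_indep F (\<lambda>i. \<beta> ^ i) {..card B}"
    using not_lin_indep_if_card_less[OF B(1), of "{..card B}" "\<lambda>i. \<beta> ^ i" id] B(2) by simp
  then obtain c j where c: "\<forall>i\<in>{..card B}. c i \<in> F" "(\<Sum>i\<le>card B. c i * \<beta> ^ i) = 0"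
    "j \<le> card B" "c j \<noteq> 0"
    unfolding lin_indep_def by blast
  define q where "q = (\<Sum>i\<le>card B. monom (c i) i)"
  have "coeff q j \<noteq> 0" using c(3,4) by (simp add: q_def coeff_sum_monom_if)
  then show ?thesis
    using c(1,2) by (intro exI[of _ q]) (auto simp: q_def poly_over_sum_monom poly_sum_monom)
qed

lemma exists_minpoly: "\<exists>p. is_minpoly F \<beta> p"
proof -
  obtain q where q: "poly_over F q" "q \<noteq> 0" "poly q \<beta> = 0"
    and q_min: "\<And>r. poly_over F r \<Longrightarrow> r \<noteq> 0 \<Longrightarrow> poly r \<beta> = 0 \<Longrightarrow> degree q \<le> degree r"
    using exists_poly_root[of \<beta>]
      ex_has_least_nat[of "\<lambda>q. poly_over F q \<and> q \<noteq> 0 \<and> poly q \<beta> = 0" _ degree]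
    by blast
  have "lead_coeff q \<noteq> 0" using q(2) by simp
  then have "is_minpoly F \<beta> (smult (inverse (lead_coeff q)) q)"
    using q q_min unfolding is_minpoly_def
    by (auto intro!: poly_over_smult inverse_mem) (simp add: poly_over_def)
  then show ?thesis by blast
qed

lemma lin_indep_squares:
  fixes u :: "nat \<Rightarrow> 'a"
  assumes char2: "(2::'a) = 0" and "square_span F = UNIV" and "finite J" and "lin_indep F u J"
  shows "lin_indep F (\<lambda>j. (u j)\<^sup>2) J"
proof -
  obtain B where B: "finite B" "lin_span F id B = UNIV" by (rule exists_spanning_set)
  obtain J2 u2 where basis: "J \<subseteq> J2" "finite J2" "\<forall>j\<in>J. u2 j = u j"
    "lin_indep F u2 J2" "lin_span F u2 J2 = UNIV"
    using lin_indep_extends_to_basis[OF B assms(3,4)] by blast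
  have "lin_span F (\<lambda>j. (u2 j)\<^sup>2) J2 = UNIV"
    using square_span_subset_lin_span_squares[OF char2 basis(5)] assms(2) by auto
  then have "lin_indep F (\<lambda>j. (u2 j)\<^sup>2) J"
    using lin_indep_if_spanning[OF basis(2,4)] lin_indep_subset basis(1,2) by blast
  then show ?thesis using basis(3) lin_indep_cong[of J "\<lambda>j. (u2 j)\<^sup>2"] by simp
qed

lemma minpoly_pderiv_neq_0:
  assumes char2: "(2::'a) = 0" and "square_span F = UNIV" and mp: "is_minpoly F \<beta> p"
  shows "pderiv p \<noteq> 0"
proof
  assume "pderiv p = 0"
  then have odd_coeff: "coeff p i = 0" if "odd i" for i
    using char2_pderiv_eq_0_imp_odd_coeff[OF char2] that by blast
  let ?m = "degree p div 2"
  have "coeff p (degree p) = 1" using mp by (simp add: is_minpoly_def)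
  then have m: "2 * ?m = degree p" using odd_coeff[of "degree p"] by fastforce
  have "lin_indep F (\<lambda>k. (\<beta> ^ k)\<^sup>2) {..<degree p}"
    using lin_indep_squares[OF char2 assms(2) _ lin_indep_powers_minpoly[OF mp]] by simp
  moreover have "{..?m} \<subseteq> {..<degree p}" using minpoly_degree_pos[OF mp] by auto
  ultimately have indep: "lin_indep F (\<lambda>k. (\<beta> ^ k)\<^sup>2) {..?m}" by (rule lin_indep_subset) simp
  have "(\<Sum>k\<le>?m. coeff p (2 * k) * (\<beta> ^ k)\<^sup>2) = 0"
    using poly_eq_sum_even_coeffs[OF odd_coeff] mp by (simp add: is_minpoly_def)
  moreover have "\<forall>k\<in>{..?m}. coeff p (2 * k) \<in> F" using mp
    by (simp add: is_minpoly_def poly_over_def)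
  ultimately have "coeff p (2 * ?m) = 0"
    using indep[unfolded lin_indep_def, rule_format, of "\<lambda>k. coeff p (2 * k)" ?m] by simp
  then show False using m \<open>coeff p (degree p) = 1\<close> by simp
qed

lemma minpoly_separable:
  assumes "(2::'a) = 0" and "square_span F = UNIV" and mp: "is_minpoly F \<beta> p"
  shows "separable_poly p"
  unfolding separable_poly_def
proof (rule minpoly_coprime[OF mp])
  show "poly_over F (pderiv p)" using mp by (simp add: is_minpoly_def poly_over_pderiv)
  show "pderiv p \<noteq> 0" using minpoly_pderiv_neq_0[OF assms] .
  show "degree (pderiv p) < degree p" using degree_pderiv_less minpoly_degree_pos[OF mp] .
qed

end

theorem lemma7p1:
  fixes F :: "'a::field set" and a :: "'a ^ 'n::finite" and lam :: 'a
  assumes char2: "(2::'a) = 0"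
    and subF: "is_subfield F"
    and fin: "finite_ext F"
    and coeffs: "\<forall>i. a $ i \<in> F"
    and nonzero: "\<exists>i. a $ i \<noteq> 0"
    and hlam: "lam \<noteq> 0"
    and G: "lam \<in> sim_factors a"
  shows "separable_ext F (adjoin F lam) \<or> \<not> separable_ext (adjoin F lam) UNIV"
  \<comment> \<open>\<open>hlam\<close> is redundant: \<open>sim_factors a\<close> only contains nonzero factors.\<close>
proof (rule disjCI)
  interpret finite_extension F using subF fin by unfold_locales
  assume "\<not> \<not> separable_ext (adjoin F lam) UNIV"
  then have sep: "separable_elem (adjoin F lam) \<alpha>" for \<alpha>
    by (simp add: separable_ext_def)
  have "adjoin F lam \<subseteq> square_span F"
    unfolding adjoin_def
    using is_subfield_square_span[OF char2] mem_square_span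
      sim_factor_mem_square_span[OF coeffs nonzero G]
    by (intro Inter_lower) auto
  then have "square_span F = UNIV"
    using separable_mem_square_span[OF char2 _ sep] by blast
  then show "separable_ext F (adjoin F lam)"
    using exists_minpoly minpoly_separable[OF char2]
    unfolding separable_ext_def separable_elem_def by blast
qed

end
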